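(* Let $M,N$ be weights of $\mathbb{R}^m,\mathbb{R}^n$, let $A\in\mathbb{R}^{m\times n}$ with $MA=AN$, and let $K\subseteq\mathbb{R}^n$ be a closed cone. Then $$(A\circ I\circ K)^{[*]}\cap\mathcal{R}(A\circ I)\subseteq (A^{[\dagger]})^{[*]}\circ I\circ K^{[*]}.$$ If moreover $A^{[\dagger]}\circ A\circ K\subseteq K$, then equality holds.
   Context: A weight is a real symmetric matrix $W$ with $W^2=I$. $\mathbb{R}^m$ and $\mathbb{R}^n$ carry weights $M\in\mathbb{R}^{m\times m}$ and $N\in\mathbb{R}^{n\times n}$, respectively. The indefinite inner product on the space with weight $W$ is $[x,y]=\langle x,Wy\rangle$. Indefinite matrix product: if $B$ has $p$ columns and $C$ has $p$ rows (or is a vector in $\mathbb{R}^p$), $p\in\{m,n\}$, and $W$ is the weight of $\mathbb{R}^p$, then $B\circ C:=BWC$. $I$ denotes an identity matrix of the appropriate size. Indefinite adjoint of $B\in\mathbb{R}^{p\times q}$: $B^{[*]}:=W_qB^TW_p$, where $W_p,W_q$ are the weights of $\mathbb{R}^p,\mathbb{R}^q$. Indefinite Moore–Penrose inverse: $A^{[\dagger]}$ is the unique $X\in\mathbb{R}^{n\times m}$ such that - $A\circ X\circ A=A$, - $X\circ A\circ X=X$, - $(A\circ X)^{[*]}=A\circ X$, - $(X\circ A)^{[*]}=X\circ A$. It equals $NA^\dagger M$. Range and null space: for a matrix $B$ with $q$ columns, $\mathcal{R}(B)=\{B\circ x:x\in\mathbb{R}^q\}$ and $\mathcal{N}(B)=\{x\in\mathbb{R}^q:B\circ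 x=0\}$. A cone is a nonempty set closed under addition and under multiplication by nonnegative scalars. For $S$ a subset of $\mathbb{R}^p$ with weight $W$, the dual is $S^{[*]}=\{x\in\mathbb{R}^p:[x,t]\ge0\ \forall t\in S\}$. For a matrix $B$ and a set $S$, $B\circ S=\{B\circ s:s\in S\}$. *)

theory Defs
  imports "HOL-Analysis.Analysis"
begin

definition is_weight :: "real^'p^'p \<Rightarrow> bool" where
  "is_weight W \<longleftrightarrow> transpose W = W \<and> W ** W = mat 1"

definition iprod :: "real^'p^'p \<Rightarrow> real^'p^'a \<Rightarrow> real^'b^'p \<Rightarrow> real^'b^'a" where
  "iprod W B C = B ** W ** C"

definition iapp :: "real^'p^'p \<Rightarrow> real^'p^'a \<Rightarrow> real^'p \<Rightarrow> real^'a" where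
  "iapp W B x = B *v (W *v x)"

definition indef_adj :: "real^'p^'p \<Rightarrow> real^'q^'q \<Rightarrow> real^'q^'p \<Rightarrow> real^'p^'q" where
  "indef_adj Wp Wq B = Wq ** transpose B ** Wp"

definition indef_MP :: "real^'m^'m \<Rightarrow> real^'n^'n \<Rightarrow> real^'n^'m \<Rightarrow> real^'m^'n" where
  "indef_MP M N A = (THE X.
      iprod M (iprod N A X) A = A \<and>
      iprod N (iprod M X A) X = X \<and>
      indef_adj M M (iprod N A X) = iprod N A X \<and>
      indef_adj N N (iprod M X A) = iprod M X A)"

definition irange :: "real^'q^'q \<Rightarrow> real^'q^'p \<Rightarrow> (real^'p) set" where
  "irange Wq B = {iapp Wq B x | x. True}"

definition is_cone :: "('a::real_vector) set \<Rightarrow> bool" where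
  "is_cone S \<longleftrightarrow> S \<noteq> {} \<and> (\<forall>x\<in>S. \<forall>y\<in>S. x + y \<in> S) \<and> (\<forall>x\<in>S. \<forall>c::real. c \<ge> 0 \<longrightarrow> c *\<^sub>R x \<in> S)"

text \<open>Indefinite dual: S^[*] = {x. [x,t] = <x, W t> >= 0 for all t in S}.\<close>
definition idual :: "real^'p^'p \<Rightarrow> (real^'p) set \<Rightarrow> (real^'p) set" where
  "idual W S = {x. \<forall>t\<in>S. inner x (W *v t) \<ge> 0}"

end

theory Submission
  imports Defs
begin

text \<open>The ordinary Moore--Penrose inverse \<open>Y\<close> of \<open>A\<close> exists: \<open>Y y\<close> is the solution of the
  normal equations \<open>A\<^sup>T A u = A\<^sup>T y\<close> that lies in the row space of \<open>A\<close>. Since weights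
  are involutions, the indefinite Penrose equations for \<open>X\<close> are the ordinary ones for
  \<open>N X M\<close>, so \<open>A\<^sup>[\<dagger>] = N Y M\<close> and \<open>(A\<^sup>[\<dagger>])\<^sup>[*] = Y\<^sup>T\<close>. The inclusion is then a
  Euclidean computation: for \<open>y = A x\<close> in \<open>(A K)\<^sup>[*]\<close> the vector \<open>z = N A\<^sup>T M y\<close> lies in
  \<open>K\<^sup>[*]\<close>, because \<open>[z, k] = [y, A k]\<close>, and \<open>Y\<^sup>T z = A Y y = y\<close> because \<open>A\<^sup>T M = N A\<^sup>T\<close>.
  Conversely \<open>[Y\<^sup>T z, A k] = [z, N Y A N k]\<close>, which is nonnegative when
  \<open>A\<^sup>[\<dagger>] A K \<subseteq> K\<close>.\<close>

declare transpose_matrix_vector [simp del] vector_transpose_matrix [simp del]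

lemma inner_transpose_matrix_vector:
  fixes B :: "real^'n^'m"
  shows "inner (transpose B *v x) y = inner x (B *v y)"
  by (simp add: dot_lmul_matrix transpose_matrix_vector)

lemma transpose_eq_self_if_inner_symmetric:
  fixes B :: "real^'n^'n"
  assumes "\<And>x y. inner (B *v x) y = inner x (B *v y)"
  shows "transpose B = B"
proof -
  have "inner (transpose B *v x - B *v x) y = 0" for x y
    using assms[of x y] by (simp add: inner_diff_left inner_transpose_matrix_vector)
  then show ?thesis
    by (metis inner_eq_zero_iff matrix_eq right_minus_eq)
qed

lemma mult_eq_0_if_gram_mult_eq_0:
  fixes A :: "real^'n^'m"
  assumes "(transpose A ** A) *v v = 0"
  shows "A *v v = 0"
proof -
  have "inner (A *v v) (A *v v) = inner v ((transpose A ** A) *v v)"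
    using inner_transpose_matrix_vector[of "transpose A" v "A *v v"]
    by (simp add: matrix_vector_mul_assoc)
  then show ?thesis using assms by simp
qed

lemma row_space_mult_eq_0_imp_eq_0:
  fixes A :: "real^'n^'m"
  assumes "v \<in> range ((*v) (transpose A))" and "A *v v = 0"
  shows "v = 0"
proof -
  obtain u where "v = transpose A *v u" using assms(1) by blast
  then have "inner v v = inner u (A *v v)" by (simp add: inner_transpose_matrix_vector)
  then show ?thesis using assms(2) by simp
qed

lemma inj_on_gram_row_space:
  fixes A :: "real^'n^'m"
  shows "inj_on (\<lambda>x. (transpose A ** A) *v x) (range ((*v) (transpose A)))"
proof (rule inj_onI)
  fix x y assume xy: "x \<in> range ((*v) (transpose A))" "y \<in> range ((*v) (transpose A))"
    and "(transpose A ** A) *v x = (transpose A ** A) *v y"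
  then have "(transpose A ** A) *v (x - y) = 0"
    by (simp add: matrix_vector_mult_diff_distrib)
  then have "A *v (x - y) = 0" by (rule mult_eq_0_if_gram_mult_eq_0)
  moreover have "x - y \<in> range ((*v) (transpose A))"
  proof -
    obtain u v where "x = transpose A *v u" "y = transpose A *v v" using xy by blast
    then have "x - y = transpose A *v (u - v)" by (simp add: matrix_vector_mult_diff_distrib)
    then show ?thesis by blast
  qed
  ultimately have "x - y = 0" using row_space_mult_eq_0_imp_eq_0 by blast
  then show "x = y" by simp
qed

lemma gram_image_row_space:
  fixes A :: "real^'n^'m"
  defines "S \<equiv> range ((*v) (transpose A))"
  shows "(\<lambda>x. (transpose A ** A) *v x) ` S = S"
proof (rule subspace_dim_equal)
  have lin: "linear (\<lambda>x. (transpose A ** A) *v x)" by simp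
  have sS: "subspace S" unfolding S_def by (simp add: linear_subspace_image)
  show "subspace ((\<lambda>x. (transpose A ** A) *v x) ` S)" by (rule linear_subspace_image[OF lin sS])
  show "subspace S" by (fact sS)
  show "(\<lambda>x. (transpose A ** A) *v x) ` S \<subseteq> S"
    unfolding S_def by (auto simp flip: matrix_vector_mul_assoc)
  have "span S = S" using sS by (simp add: span_eq_iff)
  then have "inj_on (\<lambda>x. (transpose A ** A) *v x) (span S)"
    using inj_on_gram_row_space[of A] by (simp only: S_def)
  then show "dim S \<le> dim ((\<lambda>x. (transpose A ** A) *v x) ` S)"
    using dim_image_eq[OF lin] by simp
qed

lemma normal_equations_row_space_solution:
  fixes A :: "real^'n^'m"
  obtains Y :: "real^'m^'n"
  where "\<And>y. Y *v y \<in> range ((*v) (transpose A))"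
    and "\<And>y. (transpose A ** A) *v (Y *v y) = transpose A *v y"
proof -
  define S where "S = range ((*v) (transpose A))"
  have "span S = S" by (simp add: S_def span_eq_iff linear_subspace_image)
  then obtain g where g: "range g \<subseteq> S" "linear g" "\<And>x. x \<in> S \<Longrightarrow> g ((transpose A ** A) *v x) = x"
    using linear_inj_on_left_inverse[of "\<lambda>x. (transpose A ** A) *v x" S]
      inj_on_gram_row_space[of A]
    by (simp only: S_def) blast
  define Y where "Y = matrix (\<lambda>y. g (transpose A *v y))"
  have Y: "Y *v y = g (transpose A *v y)" for y
    unfolding Y_def using g(2) by (simp add: linear_compose[unfolded o_def] matrix_works)
  show thesis
  proof
    show "Y *v y \<in> range ((*v) (transpose A))" for y using Y g(1) by (auto simp: S_def)
    show "(transpose A ** A) *v (Y *v y) = transpose A *v y" for y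
    proof -
      have "transpose A *v y \<in> (\<lambda>x. (transpose A ** A) *v x) ` S"
        unfolding S_def gram_image_row_space by blast
      then obtain u where "u \<in> S" "transpose A *v y = (transpose A ** A) *v u" by blast
      then show ?thesis using Y g(3) by simp
    qed
  qed
qed

definition moore_penrose_inverse :: "real^'n^'m \<Rightarrow> real^'m^'n \<Rightarrow> bool" where
  "moore_penrose_inverse A Y \<longleftrightarrow>
     A ** Y ** A = A \<and> Y ** A ** Y = Y \<and>
     transpose (A ** Y) = A ** Y \<and> transpose (Y ** A) = Y ** A"

lemma moore_penrose_inverse_if_normal_equations:
  fixes A :: "real^'n^'m" and Y :: "real^'m^'n"
  assumes row: "\<And>y. Y *v y \<in> range ((*v) (transpose A))"
    and normal: "\<And>y. (transpose A ** A) *v (Y *v y) = transpose A *v y"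
  shows "moore_penrose_inverse A Y"
proof -
  have AYA: "A *v (Y *v (A *v x)) = A *v x" for x
  proof -
    have "(transpose A ** A) *v (Y *v (A *v x) - x) = 0"
      using normal[of "A *v x"] by (simp add: matrix_vector_mult_diff_distrib matrix_vector_mul_assoc)
    then show ?thesis using mult_eq_0_if_gram_mult_eq_0 by (fastforce simp: matrix_vector_mult_diff_distrib)
  qed
  have YAY: "Y *v (A *v (Y *v y)) = Y *v y" for y
  proof -
    obtain u v where "Y *v (A *v (Y *v y)) = transpose A *v u" "Y *v y = transpose A *v v"
      using row by blast
    then have "Y *v (A *v (Y *v y)) - Y *v y \<in> range ((*v) (transpose A))"
      by (metis matrix_vector_mult_diff_distrib rangeI)
    moreover have "A *v (Y *v (A *v (Y *v y)) - Y *v y) = 0"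
      by (simp add: AYA matrix_vector_mult_diff_distrib)
    ultimately show ?thesis using row_space_mult_eq_0_imp_eq_0 by fastforce
  qed
  have AY_inner: "inner (A *v (Y *v y)) z = inner (A *v (Y *v y)) (A *v (Y *v z))" for y z
  proof -
    have "inner (A *v (Y *v y)) z = inner (Y *v y) (transpose A *v z)"
      using inner_transpose_matrix_vector[of "transpose A" "Y *v y" z] by simp
    also have "\<dots> = inner (Y *v y) ((transpose A ** A) *v (Y *v z))" by (simp add: normal)
    also have "\<dots> = inner (A *v (Y *v y)) (A *v (Y *v z))"
      using inner_transpose_matrix_vector[of "transpose A" "Y *v y" "A *v (Y *v z)"]
      by (simp add: matrix_vector_mul_assoc matrix_mul_assoc)
    finally show ?thesis .
  qed
  have YA_inner: "inner (Y *v (A *v x)) z = inner (Y *v (A *v x)) (Y *v (A *v z))" for x z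
  proof -
    obtain r where r: "Y *v (A *v x) = transpose A *v r" using row by blast
    have "inner (transpose A *v r) z = inner r (A *v z)"
      by (rule inner_transpose_matrix_vector)
    also have "\<dots> = inner r (A *v (Y *v (A *v z)))" by (simp add: AYA)
    also have "\<dots> = inner (transpose A *v r) (Y *v (A *v z))"
      by (simp add: inner_transpose_matrix_vector)
    finally show ?thesis using r by simp
  qed
  have "A ** Y ** A = A" by (simp add: matrix_eq AYA flip: matrix_vector_mul_assoc)
  moreover have "Y ** A ** Y = Y" by (simp add: matrix_eq YAY flip: matrix_vector_mul_assoc)
  moreover have "transpose (A ** Y) = A ** Y"
    by (rule transpose_eq_self_if_inner_symmetric)
      (metis AY_inner inner_commute matrix_vector_mul_assoc)
  moreover have "transpose (Y ** A) = Y ** A"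
    by (rule transpose_eq_self_if_inner_symmetric)
      (metis YA_inner inner_commute matrix_vector_mul_assoc)
  ultimately show ?thesis by (simp add: moore_penrose_inverse_def)
qed

lemma moore_penrose_inverse_exists:
  fixes A :: "real^'n^'m"
  obtains Y where "moore_penrose_inverse A Y"
  using normal_equations_row_space_solution moore_penrose_inverse_if_normal_equations by metis

lemma moore_penrose_inverse_unique:
  assumes "moore_penrose_inverse A Y" and "moore_penrose_inverse A Z"
  shows "Y = Z"
proof -
  have Y: "A ** Y ** A = A" "Y ** A ** Y = Y" "transpose (A ** Y) = A ** Y" "transpose (Y ** A) = Y ** A"
    and Z: "A ** Z ** A = A" "Z ** A ** Z = Z" "transpose (A ** Z) = A ** Z" "transpose (Z ** A) = Z ** A"
    using assms by (auto simp: moore_penrose_inverse_def)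
  have "Y = Y ** transpose (A ** Y)" using Y by (simp add: matrix_mul_assoc)
  also have "\<dots> = Y ** transpose Y ** transpose A"
    by (simp add: matrix_transpose_mul matrix_mul_assoc)
  also have "\<dots> = Y ** transpose Y ** transpose (A ** Z ** A)"
    by (simp only: Z(1))
  also have "\<dots> = Y ** transpose (A ** Y) ** transpose (A ** Z)"
    by (simp add: matrix_transpose_mul matrix_mul_assoc)
  also have "\<dots> = Y ** A ** Z" using Y Z by (simp add: matrix_mul_assoc)
  finally have YAZ: "Y = Y ** A ** Z" .
  have "Z = transpose (Z ** A) ** Z" using Z by simp
  also have "\<dots> = transpose A ** transpose Z ** Z"
    by (simp add: matrix_transpose_mul)
  also have "\<dots> = transpose (A ** Y ** A) ** transpose Z ** Z"
    by (simp only: Y(1))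
  also have "\<dots> = transpose (Y ** A) ** transpose (Z ** A) ** Z"
    by (simp add: matrix_transpose_mul matrix_mul_assoc)
  also have "\<dots> = Y ** A ** Z"
    by (simp add: Y(4) Z(4)) (metis Z(2) matrix_mul_assoc)
  finally show ?thesis using YAZ by simp
qed

lemma weight_transpose: "is_weight W \<Longrightarrow> transpose W = W"
  by (simp add: is_weight_def)

lemma weight_mult_self: "is_weight W \<Longrightarrow> W ** W = mat 1"
  by (simp add: is_weight_def)

lemma weight_mult_cancel_left: "is_weight W \<Longrightarrow> W ** (W ** B) = B"
  by (metis matrix_mul_assoc matrix_mul_lid weight_mult_self)

lemma weight_mult_cancel_right: "is_weight W \<Longrightarrow> B ** W ** W = B"
  by (metis matrix_mul_assoc matrix_mul_rid weight_mult_self)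

lemma weight_mult_left_eq_iff: "is_weight W \<Longrightarrow> W ** B = C \<longleftrightarrow> B = W ** C"
  by (metis matrix_mul_assoc matrix_mul_lid weight_mult_self)

lemma weight_mult_right_eq_iff: "is_weight W \<Longrightarrow> B ** W = C \<longleftrightarrow> B = C ** W"
  by (metis matrix_mul_assoc matrix_mul_rid weight_mult_self)

lemma weight_sandwich_eq_iff:
  "is_weight N \<Longrightarrow> is_weight M \<Longrightarrow> N ** B ** M = N ** C ** M \<longleftrightarrow> B = C"
  by (metis matrix_mul_assoc matrix_mul_lid matrix_mul_rid weight_mult_self)

lemma weight_sandwich_cancel:
  "is_weight N \<Longrightarrow> is_weight M \<Longrightarrow> N ** (N ** B ** M) ** M = B"
  by (metis matrix_mul_assoc matrix_mul_lid matrix_mul_rid weight_mult_self)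

lemma weight_mult_vector_cancel: "is_weight W \<Longrightarrow> W *v (W *v v) = v"
  by (simp add: matrix_vector_mul_assoc weight_mult_self)

lemma inner_weight_commute: "is_weight W \<Longrightarrow> inner (W *v u) v = inner u (W *v v)"
  by (metis inner_transpose_matrix_vector weight_transpose)

lemma indef_penrose_iff_moore_penrose:
  fixes M :: "real^'m^'m" and N :: "real^'n^'n" and A :: "real^'n^'m" and X :: "real^'m^'n"
  assumes M: "is_weight M" and N: "is_weight N"
  shows "(iprod M (iprod N A X) A = A \<and> iprod N (iprod M X A) X = X \<and>
          indef_adj M M (iprod N A X) = iprod N A X \<and> indef_adj N N (iprod M X A) = iprod M X A)
     \<longleftrightarrow> moore_penrose_inverse A (N ** X ** M)"
proof -
  have "iprod M (iprod N A X) A = A \<longleftrightarrow> A ** (N ** X ** M) ** A = A"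
    by (simp add: iprod_def matrix_mul_assoc)
  moreover have "iprod N (iprod M X A) X = X \<longleftrightarrow>
      (N ** X ** M) ** A ** (N ** X ** M) = N ** X ** M"
  proof -
    have "(N ** X ** M) ** A ** (N ** X ** M) = N ** (X ** M ** A ** N ** X) ** M"
      by (simp add: matrix_mul_assoc)
    then show ?thesis by (simp add: iprod_def weight_sandwich_eq_iff[OF N M])
  qed
  moreover have "indef_adj M M (iprod N A X) = iprod N A X \<longleftrightarrow>
      transpose (A ** (N ** X ** M)) = A ** (N ** X ** M)"
    using weight_mult_right_eq_iff[OF M]
    by (simp add: iprod_def indef_adj_def matrix_transpose_mul weight_transpose[OF M] matrix_mul_assoc)
  moreover have "indef_adj N N (iprod M X A) = iprod M X A \<longleftrightarrow>
      transpose ((N ** X ** M) ** A) = (N ** X ** M) ** A"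
    using weight_mult_left_eq_iff[OF N, of "transpose (X ** M ** A) ** N" "X ** M ** A"]
    by (simp add: iprod_def indef_adj_def matrix_transpose_mul weight_transpose[OF N] matrix_mul_assoc)
  ultimately show ?thesis by (simp add: moore_penrose_inverse_def)
qed

lemma indef_MP_eq:
  fixes M :: "real^'m^'m" and N :: "real^'n^'n" and A :: "real^'n^'m"
  assumes M: "is_weight M" and N: "is_weight N" and Y: "moore_penrose_inverse A Y"
  shows "indef_MP M N A = N ** Y ** M"
  unfolding indef_MP_def
proof (rule the_equality)
  show "iprod M (iprod N A (N ** Y ** M)) A = A \<and>
      iprod N (iprod M (N ** Y ** M) A) (N ** Y ** M) = N ** Y ** M \<and>
      indef_adj M M (iprod N A (N ** Y ** M)) = iprod N A (N ** Y ** M) \<and>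
      indef_adj N N (iprod M (N ** Y ** M) A) = iprod M (N ** Y ** M) A"
    using Y by (simp add: indef_penrose_iff_moore_penrose[OF M N] weight_sandwich_cancel[OF N M])
next
  fix X assume "iprod M (iprod N A X) A = A \<and> iprod N (iprod M X A) X = X \<and>
      indef_adj M M (iprod N A X) = iprod N A X \<and> indef_adj N N (iprod M X A) = iprod M X A"
  then have "N ** X ** M = Y"
    using moore_penrose_inverse_unique Y by (auto simp: indef_penrose_iff_moore_penrose[OF M N])
  then show "X = N ** Y ** M" by (metis weight_sandwich_cancel[OF N M])
qed

lemma iapp_iprod_mat_1:
  "is_weight W \<Longrightarrow> iapp W (iprod W B (mat 1)) x = B *v x"
  by (simp add: iapp_def iprod_def weight_mult_vector_cancel flip: matrix_vector_mul_assoc)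

lemma irange_iprod_mat_1:
  "is_weight W \<Longrightarrow> irange W (iprod W B (mat 1)) = range ((*v) B)"
  by (auto simp: irange_def iapp_iprod_mat_1)

lemma indef_adj_indef_MP:
  fixes M :: "real^'m^'m" and N :: "real^'n^'n" and A :: "real^'n^'m"
  assumes M: "is_weight M" and N: "is_weight N" and "moore_penrose_inverse A Y"
  shows "indef_adj N M (indef_MP M N A) = transpose Y"
  by (simp add: indef_MP_eq[OF assms] indef_adj_def matrix_transpose_mul matrix_mul_assoc
      weight_transpose[OF M] weight_transpose[OF N] weight_mult_self[OF M]
      weight_mult_cancel_right[OF N])

lemma iapp_indef_MP_mult:
  fixes M :: "real^'m^'m" and N :: "real^'n^'n" and A :: "real^'n^'m"
  assumes M: "is_weight M" and "is_weight N" and "moore_penrose_inverse A Y"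
  shows "iapp N (iprod M (indef_MP M N A) A) k = N *v (Y *v (A *v (N *v k)))"
  by (simp add: indef_MP_eq[OF assms] iapp_def iprod_def matrix_vector_mul_assoc matrix_mul_assoc
      weight_mult_cancel_right[OF M])

lemma dual_image_inter_range_subset:
  fixes M :: "real^'m^'m" and N :: "real^'n^'n" and A :: "real^'n^'m" and K :: "(real^'n) set"
  assumes M: "is_weight M" and N: "is_weight N" and MA: "M ** A = A ** N"
    and Y: "moore_penrose_inverse A Y"
  shows "idual M ((*v) A ` K) \<inter> range ((*v) A) \<subseteq> (*v) (transpose Y) ` idual N K"
proof
  fix y assume "y \<in> idual M ((*v) A ` K) \<inter> range ((*v) A)"
  then obtain x where y_dual: "\<And>k. k \<in> K \<Longrightarrow> inner y (M *v (A *v k)) \<ge> 0" and y: "y = A *v x"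
    by (auto simp: idual_def)
  define z where "z = N *v (transpose A *v (M *v y))"
  have "inner z (N *v k) = inner y (M *v (A *v k))" for k
    by (simp add: z_def inner_weight_commute[OF N] weight_mult_vector_cancel[OF N]
        inner_transpose_matrix_vector inner_weight_commute[OF M])
  then have "z \<in> idual N K" using y_dual by (simp add: idual_def)
  moreover have "transpose Y *v z = y"
  proof -
    have "transpose A ** M = N ** transpose A"
      using MA by (metis matrix_transpose_mul weight_transpose[OF M] weight_transpose[OF N])
    then have "transpose Y ** N ** transpose A ** M = transpose Y ** (N ** (N ** transpose A))"
      by (metis matrix_mul_assoc)
    also have "\<dots> = transpose (A ** Y)"
      by (simp add: weight_mult_cancel_left[OF N] matrix_transpose_mul)
    also have "\<dots> = A ** Y" using Y by (simp add: moore_penrose_inverse_def)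
    finally have "transpose Y *v z = (A ** Y) *v y"
      by (simp add: z_def matrix_vector_mul_assoc matrix_mul_assoc)
    also have "\<dots> = (A ** Y ** A) *v x" by (simp add: y matrix_vector_mul_assoc)
    finally show ?thesis using Y by (simp add: y moore_penrose_inverse_def)
  qed
  ultimately show "y \<in> (*v) (transpose Y) ` idual N K" by force
qed

lemma image_dual_subset_dual_image:
  fixes M :: "real^'m^'m" and N :: "real^'n^'n" and A :: "real^'n^'m" and K :: "(real^'n) set"
  assumes N: "is_weight N" and MA: "M ** A = A ** N" and Y: "moore_penrose_inverse A Y"
    and K: "(\<lambda>k. N *v (Y *v (A *v (N *v k)))) ` K \<subseteq> K"
  shows "(*v) (transpose Y) ` idual N K \<subseteq> idual M ((*v) A ` K) \<inter> range ((*v) A)"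
proof
  fix y assume "y \<in> (*v) (transpose Y) ` idual N K"
  then obtain z where z_dual: "\<And>k. k \<in> K \<Longrightarrow> inner z (N *v k) \<ge> 0" and y: "y = transpose Y *v z"
    by (auto simp: idual_def)
  have "transpose Y = transpose (Y ** A ** Y)" using Y by (simp add: moore_penrose_inverse_def)
  also have "\<dots> = transpose (A ** Y) ** transpose Y"
    by (simp add: matrix_transpose_mul matrix_mul_assoc)
  also have "\<dots> = A ** Y ** transpose Y"
    using Y by (simp add: moore_penrose_inverse_def)
  finally have "y = A *v (Y *v (transpose Y *v z))"
    unfolding y by (metis matrix_vector_mul_assoc)
  then have "y \<in> range ((*v) A)" by blast
  moreover have "inner y (M *v (A *v k)) \<ge> 0" if "k \<in> K" for k
  proof -
    have "M *v (A *v k) = A *v (N *v k)" by (simp add: matrix_vector_mul_assoc MA)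
    then have "inner y (M *v (A *v k)) = inner z (Y *v (A *v (N *v k)))"
      by (simp add: y inner_transpose_matrix_vector)
    also have "\<dots> = inner z (N *v (N *v (Y *v (A *v (N *v k)))))"
      by (simp only: weight_mult_vector_cancel[OF N])
    also have "\<dots> \<ge> 0" using z_dual K that by blast
    finally show ?thesis .
  qed
  ultimately show "y \<in> idual M ((*v) A ` K) \<inter> range ((*v) A)" by (auto simp: idual_def)
qed

theorem lemma3p8:
  fixes M :: "real^'m^'m" and N :: "real^'n^'n" and A :: "real^'n^'m"
    and K :: "(real^'n) set"
  assumes "is_weight M" and "is_weight N" and "M ** A = A ** N"
    and "is_cone K" and "closed K"
  shows "(idual M ((iapp N (iprod N A (mat 1))) ` K) \<inter> irange N (iprod N A (mat 1))
           \<subseteq> (iapp N (iprod N (indef_adj N M (indef_MP M N A)) (mat 1))) ` (idual N K))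
       \<and> ((iapp N (iprod M (indef_MP M N A) A)) ` K \<subseteq> K \<longrightarrow>
         idual M ((iapp N (iprod N A (mat 1))) ` K) \<inter> irange N (iprod N A (mat 1))
           = (iapp N (iprod N (indef_adj N M (indef_MP M N A)) (mat 1))) ` (idual N K))"
proof -
  obtain Y where Y: "moore_penrose_inverse A Y" by (rule moore_penrose_inverse_exists)
  have A_map: "iapp N (iprod N A (mat 1)) = (*v) A"
    using assms(2) by (simp add: iapp_iprod_mat_1 fun_eq_iff)
  have Y_map: "iapp N (iprod N (indef_adj N M (indef_MP M N A)) (mat 1)) = (*v) (transpose Y)"
    using assms(1,2) Y by (simp add: iapp_iprod_mat_1 indef_adj_indef_MP fun_eq_iff)
  have range: "irange N (iprod N A (mat 1)) = range ((*v) A)"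
    using assms(2) by (rule irange_iprod_mat_1)
  have "iapp N (iprod M (indef_MP M N A) A) ` K = (\<lambda>k. N *v (Y *v (A *v (N *v k)))) ` K"
    using assms(1,2) Y by (simp add: iapp_indef_MP_mult)
  then show ?thesis
    unfolding A_map Y_map range
    using dual_image_inter_range_subset[OF assms(1-3) Y, of K]
      image_dual_subset_dual_image[OF assms(2,3) Y, of K] by (simp add: subset_antisym)
qed

end
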